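(* Let $\mu, \nu$ be compactly supported probability measures on $\mathbb{R}$, and suppose there is a function $H_{\mu,\nu} \in L^2(\mu)$ such that $(\mu\otimes\nu)[\partial f] = \int H_{\mu,\nu} f\, d\mu$ for every polynomial $f$. Then for all polynomials $f, g$, \[ \int \bigl(L_\nu[L_\mu[f]] - H_{\mu,\nu} L_\mu[f]\bigr)\, g \, d\mu = -\int L_\mu[f]\, L_\mu[g]\, d\nu , \] so in particular the operator $L_\nu L_\mu - H_{\mu,\nu} L_\mu$ is symmetric with respect to the inner product of $L^2(\mu)$ on polynomials.
   Context: For a polynomial $f$, $(\partial f)(x,y) = \frac{f(x)-f(y)}{x-y}$ (a polynomial in two variables), $(\mu\otimes\nu)[F] = \iint F(x,y)\,d\mu(x)\,d\nu(y)$, and $L_\mu[f](x) = \int \frac{f(x)-f(y)}{x-y}\,d\mu(y)$. The function $H_{\mu,\nu}$ is called the c-free conjugate variable of the pair $(\mu,\nu)$. *)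

theory Defs
  imports "HOL-Analysis.Analysis" "HOL-Probability.Probability"
    "HOL-Computational_Algebra.Polynomial"
begin

text \<open>Divided difference of a (polynomial) function g: the value of the
  two-variable polynomial (g x - g y)/(x - y); on the diagonal it equals g'(x).\<close>
definition ddiff :: "(real \<Rightarrow> real) \<Rightarrow> real \<Rightarrow> real \<Rightarrow> real" where
  "ddiff g x y = (if x = y then deriv g x else (g x - g y) / (x - y))"

definition Lop :: "real measure \<Rightarrow> (real \<Rightarrow> real) \<Rightarrow> real \<Rightarrow> real" where
  "Lop \<mu> g x = (\<integral>y. ddiff g x y \<partial>\<mu>)"

definition compact_support :: "real measure \<Rightarrow> bool" where
  "compact_support \<mu> \<longleftrightarrow> (\<exists>K. compact K \<and> emeasure \<mu> (UNIV - K) = 0)"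

end

theory Submission
  imports Defs
begin

(* Write ddiff for the divided difference (the operator \<partial> of the paper) and
   put F = L_\<mu>[f], which is again a polynomial.  Integrating in the product measure
   \<mu> \<otimes> \<nu>, the left-hand side is the integral of
        \<partial>F(x,y) g(x) - \<partial>(F g)(x,y),
   where the first term comes from L_\<nu>[F] by Fubini and the second from the defining
   property of H applied to the polynomial F g.  The Leibniz rule
   \<partial>(F g)(x,y) = F(x) \<partial>g(x,y) + g(y) \<partial>F(x,y) together with the cross identity
   \<partial>F(x,y) (g(x) - g(y)) = (F(x) - F(y)) \<partial>g(x,y) turns this integrand into
   -F(y) \<partial>g(x,y), whose integral is -\<integral> F L_\<mu>[g] d\<nu>.  The right-hand side is symmetric
   in f and g, which gives the symmetry of L_\<nu> L_\<mu> - H L_\<mu>. *)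

text \<open>The divided difference is symmetric; this turns L_\<mu>[g](y) into an integral over
  the first variable of the product.\<close>
lemma ddiff_commute: "ddiff g x y = ddiff g y x"
proof -
  have "(g x - g y) / (x - y) = (g y - g x) / (y - x)"
    by (metis minus_diff_eq minus_divide_divide)
  then show ?thesis unfolding ddiff_def by auto
qed

text \<open>The cross identity: both sides equal (F x - F y)(g x - g y)/(x - y) off the diagonal.\<close>
lemma ddiff_cross: "ddiff F x y * (g x - g y) = (F x - F y) * ddiff g x y"
  unfolding ddiff_def by auto

text \<open>The diagonal value of the explicit formula below is the derivative of x^k.\<close>
lemma sum_powers_diagonal: "(\<Sum>i<k. (x::real) ^ i * x ^ (k - Suc i)) = of_nat k * x ^ (k - 1)"
proof -
  have "(\<Sum>i<k. x ^ i * x ^ (k - Suc i)) = (\<Sum>i<k. x ^ (k - 1))"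
    by (rule sum.cong) (auto simp flip: power_add)
  then show ?thesis by simp
qed

lemma ddiff_poly:
  "ddiff (poly p) x y = (\<Sum>k\<le>degree p. coeff p k * (\<Sum>i<k. x ^ i * y ^ (k - 1 - i)))"
proof (cases "x = y")
  case True
  have "poly p = (\<lambda>x. \<Sum>k\<le>degree p. coeff p k * x ^ k)"
    by (auto simp: poly_altdef fun_eq_iff)
  moreover have "((\<lambda>x. \<Sum>k\<le>degree p. coeff p k * x ^ k) has_real_derivative
      (\<Sum>k\<le>degree p. coeff p k * (of_nat k * x ^ (k - 1)))) (at x)"
    by (auto intro!: derivative_eq_intros sum.cong)
  ultimately have "deriv (poly p) x = (\<Sum>k\<le>degree p. coeff p k * (of_nat k * x ^ (k - 1)))"
    by (simp add: DERIV_imp_deriv)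
  then show ?thesis using True by (simp add: ddiff_def sum_powers_diagonal)
next
  case False
  have power_diff: "x ^ k - y ^ k = (x - y) * (\<Sum>i<k. x ^ i * y ^ (k - 1 - i))" for k
    by (simp add: power_diff_sumr2 mult.commute)
  have "poly p x - poly p y = (\<Sum>k\<le>degree p. coeff p k * (x ^ k - y ^ k))"
    by (simp add: poly_altdef sum_subtractf[symmetric] algebra_simps)
  also have "\<dots> = (x - y) * (\<Sum>k\<le>degree p. coeff p k * (\<Sum>i<k. x ^ i * y ^ (k - 1 - i)))"
    unfolding power_diff sum_distrib_left by (rule sum.cong) (simp_all add: mult.left_commute)
  finally show ?thesis using False by (simp add: ddiff_def)
qed

lemma continuous_on_ddiff_poly [continuous_intros]:
  fixes f g :: "'a::topological_space \<Rightarrow> real"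
  assumes "continuous_on S f" "continuous_on S g"
  shows "continuous_on S (\<lambda>z. ddiff (poly p) (f z) (g z))"
  unfolding ddiff_poly by (intro continuous_intros assms)

lemma ddiff_poly_mult:
  "ddiff (poly (p * q)) x y = poly p x * ddiff (poly q) x y + poly q y * ddiff (poly p) x y"
proof (cases "x = y")
  case True
  have "deriv (poly r) x = poly (pderiv r) x" for r :: "real poly"
    by (simp add: poly_DERIV DERIV_imp_deriv)
  then show ?thesis using True by (simp add: ddiff_def pderiv_mult algebra_simps)
next
  case False
  have "poly p x * poly q x - poly p y * poly q y
      = poly p x * (poly q x - poly q y) + poly q y * (poly p x - poly p y)"
    by (simp add: algebra_simps)
  then show ?thesis using False by (simp add: ddiff_def add_divide_distrib)
qed

lemma ddiff_poly_mult_cancel: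
  "ddiff (poly p) x y * poly g x - ddiff (poly (p * g)) x y = - (poly p y * ddiff (poly g) x y)"
  using ddiff_cross[of "poly p" x y "poly g"] by (simp add: ddiff_poly_mult algebra_simps)

lemma integrable_continuous_AE_compact:
  fixes f :: "'a::topological_space \<Rightarrow> real"
  assumes "finite_measure M" "sets M = sets borel" "compact K" "AE x in M. x \<in> K"
    and "continuous_on UNIV f"
  shows "integrable M f"
proof -
  have "compact (f ` K)"
    using assms(3,5) by (meson compact_continuous_image continuous_on_subset subset_UNIV)
  then obtain B where B: "\<forall>x\<in>K. norm (f x) \<le> B"
    using compact_imp_bounded bounded_iff by (metis image_eqI)
  have "f \<in> borel_measurable M"
    using borel_measurable_continuous_onI[OF assms(5)] measurable_cong_sets[OF assms(2) refl] by blast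
  then show ?thesis
    using assms(4) B
    by (intro finite_measure.integrable_const_bound[OF assms(1), of _ B]) (auto elim: AE_mp)
qed

locale compact_prob = prob_space M for M :: "real measure" +
  assumes sets_M: "sets M = sets borel"
    and compact_supp: "compact_support M"
begin

lemma space_M: "space M = UNIV"
  using sets_eq_imp_space_eq[OF sets_M] by simp

lemma obtain_compact_AE:
  obtains K where "compact K" "AE x in M. x \<in> K"
proof -
  from compact_supp obtain K where K: "compact K" "emeasure M (UNIV - K) = 0"
    unfolding compact_support_def by blast
  have "UNIV - K \<in> sets M"
    using K(1) by (simp add: sets_M compact_imp_closed borel_closed)
  with K(2) have "UNIV - K \<in> null_sets M" by (simp add: null_sets_def)
  then have "AE x in M. x \<in> K" by (rule AE_I') (auto simp: space_M)
  with K(1) that show ?thesis by blast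
qed

lemma integrable_continuous:
  fixes f :: "real \<Rightarrow> real"
  assumes "continuous_on UNIV f"
  shows "integrable M f"
proof -
  obtain K where "compact K" "AE x in M. x \<in> K" by (rule obtain_compact_AE)
  then show ?thesis
    using integrable_continuous_AE_compact[OF finite_measure_axioms sets_M] assms by blast
qed

text \<open>An L^2 function times a continuous function is integrable: the continuous factor is
  essentially bounded and L^2 functions are integrable on finite measures.\<close>
lemma integrable_L2_mult_continuous:
  assumes H: "H \<in> borel_measurable M" "integrable M (\<lambda>x. (H x)\<^sup>2)"
    and q: "continuous_on UNIV (q :: real \<Rightarrow> real)"
  shows "integrable M (\<lambda>x. H x * q x)"
proof -
  obtain K where K: "compact K" "AE x in M. x \<in> K" by (rule obtain_compact_AE)
  have "compact (q ` K)"
    using K(1) q by (meson compact_continuous_image continuous_on_subset subset_UNIV)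
  then obtain B where B: "B > 0" "\<forall>x\<in>K. \<bar>q x\<bar> \<le> B"
    using compact_imp_bounded bounded_pos by (metis image_eqI real_norm_def)
  have q_meas: "q \<in> borel_measurable M"
    using borel_measurable_continuous_onI[OF q] measurable_cong_sets[OF sets_M refl] by blast
  have "integrable M (\<lambda>x. B * \<bar>H x\<bar>)"
    using square_integrable_imp_integrable[OF H] by simp
  then show ?thesis
  proof (rule Bochner_Integration.integrable_bound)
    show "(\<lambda>x. H x * q x) \<in> borel_measurable M" using H(1) q_meas by measurable
    show "AE x in M. norm (H x * q x) \<le> norm (B * \<bar>H x\<bar>)"
      using K(2)
    proof (rule AE_mp, intro AE_I2 impI)
      fix x assume "x \<in> K"
      then have "\<bar>H x\<bar> * \<bar>q x\<bar> \<le> \<bar>H x\<bar> * B" using B by (simp add: mult_left_mono)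
      then show "norm (H x * q x) \<le> norm (B * \<bar>H x\<bar>)" using B(1) by (simp add: abs_mult mult.commute)
    qed
  qed
qed

text \<open>L_M maps polynomials to polynomials: integrating the explicit form of the divided
  difference in y replaces the powers of y by the moments of M.\<close>
lemma Lop_poly: "\<exists>Q. Lop M (poly p) = poly Q"
proof -
  define m where "m j = (\<integral>y. y ^ j \<partial>M)" for j
  define Q where "Q = (\<Sum>k\<le>degree p. \<Sum>i<k. monom (coeff p k * m (k - 1 - i)) i)"
  have int: "integrable M (\<lambda>y. c * (\<Sum>i<k. x ^ i * y ^ (k - 1 - i)))" for c x :: real and k
    by (intro integrable_continuous continuous_intros)
  have "Lop M (poly p) x = (\<Sum>k\<le>degree p. coeff p k * (\<Sum>i<k. x ^ i * m (k - 1 - i)))" for x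
    unfolding Lop_def ddiff_poly m_def
    by (simp add: int integrable_continuous continuous_intros Bochner_Integration.integral_sum)
  also have "\<dots> x = poly Q x" for x
    by (simp add: Q_def poly_sum poly_monom sum_distrib_left mult_ac)
  finally show ?thesis by blast
qed

end

lemma pair_prob_space_compact_prob:
  "compact_prob \<mu> \<Longrightarrow> compact_prob \<nu> \<Longrightarrow> pair_prob_space \<mu> \<nu>"
  unfolding pair_prob_space_def pair_sigma_finite_def compact_prob_def
  by (auto intro: prob_space_imp_sigma_finite)

lemma integrable_pair_continuous:
  fixes e :: "real \<Rightarrow> real \<Rightarrow> real"
  assumes \<mu>: "compact_prob \<mu>" and \<nu>: "compact_prob \<nu>"
    and e: "continuous_on UNIV (\<lambda>z. e (fst z) (snd z))"
  shows "integrable (\<mu> \<Otimes>\<^sub>M \<nu>) (\<lambda>(x, y). e x y)"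
proof -
  interpret pair_prob_space \<mu> \<nu> using \<mu> \<nu> by (rule pair_prob_space_compact_prob)
  interpret \<mu>: compact_prob \<mu> by (rule \<mu>)
  interpret \<nu>: compact_prob \<nu> by (rule \<nu>)
  obtain K1 where K1: "compact K1" "AE x in \<mu>. x \<in> K1" by (rule \<mu>.obtain_compact_AE)
  obtain K2 where K2: "compact K2" "AE y in \<nu>. y \<in> K2" by (rule \<nu>.obtain_compact_AE)
  have sets_pair: "sets (\<mu> \<Otimes>\<^sub>M \<nu>) = sets (borel :: (real \<times> real) measure)"
    using sets_pair_measure_cong[OF \<mu>.sets_M \<nu>.sets_M] borel_prod by metis
  have "{z \<in> space (\<mu> \<Otimes>\<^sub>M \<nu>). z \<in> K1 \<times> K2} \<in> sets (\<mu> \<Otimes>\<^sub>M \<nu>)"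
    using K1(1) K2(1) by (simp add: sets_pair space_pair_measure \<mu>.space_M \<nu>.space_M compact_imp_closed borel_closed compact_Times)
  moreover have "AE x in \<mu>. AE y in \<nu>. (x, y) \<in> K1 \<times> K2"
    using K1(2) K2(2) by (auto elim!: AE_mp)
  ultimately have "AE z in \<mu> \<Otimes>\<^sub>M \<nu>. z \<in> K1 \<times> K2"
    by (rule AE_pair_measure)
  then have "integrable (\<mu> \<Otimes>\<^sub>M \<nu>) (\<lambda>z. e (fst z) (snd z))"
    using K1(1) K2(1) e
    by (intro integrable_continuous_AE_compact[OF P.finite_measure_axioms sets_pair]) (auto intro: compact_Times)
  then show ?thesis by (simp add: case_prod_beta')
qed

lemma integral_Lop_minus_H_split:
  fixes \<mu> \<nu> :: "real measure" and H :: "real \<Rightarrow> real" and p g :: "real poly"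
  assumes \<mu>: "compact_prob \<mu>" and \<nu>: "compact_prob \<nu>"
    and H: "H \<in> borel_measurable \<mu>" "integrable \<mu> (\<lambda>x. (H x)\<^sup>2)"
  shows "(\<integral>x. (Lop \<nu> (poly p) x - H x * poly p x) * poly g x \<partial>\<mu>)
      = (\<integral>x. Lop \<nu> (poly p) x * poly g x \<partial>\<mu>) - (\<integral>x. H x * poly (p * g) x \<partial>\<mu>)"
proof -
  obtain q where q: "Lop \<nu> (poly p) = poly q" using compact_prob.Lop_poly[OF \<nu>] by blast
  have "integrable \<mu> (\<lambda>x. Lop \<nu> (poly p) x * poly g x)"
    unfolding q by (intro compact_prob.integrable_continuous[OF \<mu>] continuous_intros)
  moreover have "integrable \<mu> (\<lambda>x. H x * poly (p * g) x)"
    by (intro compact_prob.integrable_L2_mult_continuous[OF \<mu>] H continuous_intros)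
  ultimately have "(\<integral>x. Lop \<nu> (poly p) x * poly g x - H x * poly (p * g) x \<partial>\<mu>)
      = (\<integral>x. Lop \<nu> (poly p) x * poly g x \<partial>\<mu>) - (\<integral>x. H x * poly (p * g) x \<partial>\<mu>)"
    by (rule Bochner_Integration.integral_diff)
  then show ?thesis by (simp add: left_diff_distrib mult.assoc)
qed

text \<open>All three integrals are rewritten as
  integrals over \<mu> \<otimes> \<nu> and combined there by ddiff_poly_mult_cancel.\<close>
lemma integral_Lop_minus_H:
  fixes \<mu> \<nu> :: "real measure" and H :: "real \<Rightarrow> real" and p g :: "real poly"
  assumes \<mu>: "compact_prob \<mu>" and \<nu>: "compact_prob \<nu>"
    and H: "H \<in> borel_measurable \<mu>" "integrable \<mu> (\<lambda>x. (H x)\<^sup>2)"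
    and conj_var: "\<And>f :: real poly. (\<integral>y. (\<integral>x. ddiff (poly f) x y \<partial>\<mu>) \<partial>\<nu>) = (\<integral>x. H x * poly f x \<partial>\<mu>)"
  shows "(\<integral>x. (Lop \<nu> (poly p) x - H x * poly p x) * poly g x \<partial>\<mu>)
       = - (\<integral>y. poly p y * Lop \<mu> (poly g) y \<partial>\<nu>)"
proof -
  interpret pair_prob_space \<mu> \<nu> using \<mu> \<nu> by (rule pair_prob_space_compact_prob)
  define \<Phi> where "\<Phi> = (\<lambda>(x, y). ddiff (poly p) x y * poly g x)"
  define \<Psi> where "\<Psi> = (\<lambda>(x, y). ddiff (poly (p * g)) x y)"
  define \<Theta> where "\<Theta> = (\<lambda>(x, y). poly p y * ddiff (poly g) x y)"
  note int_pair = integrable_pair_continuous[OF \<mu> \<nu>]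
  have int_\<Phi>: "integrable (\<mu> \<Otimes>\<^sub>M \<nu>) \<Phi>"
    and int_\<Psi>: "integrable (\<mu> \<Otimes>\<^sub>M \<nu>) \<Psi>"
    and int_\<Theta>: "integrable (\<mu> \<Otimes>\<^sub>M \<nu>) \<Theta>"
    unfolding \<Phi>_def \<Psi>_def \<Theta>_def by (intro int_pair continuous_intros)+
  have Lop_\<mu>_g: "Lop \<mu> (poly g) y = (\<integral>x. ddiff (poly g) x y \<partial>\<mu>)" for y
    unfolding Lop_def by (subst ddiff_commute) (rule refl)
  have first: "(\<integral>x. Lop \<nu> (poly p) x * poly g x \<partial>\<mu>) = integral\<^sup>L (\<mu> \<Otimes>\<^sub>M \<nu>) \<Phi>"
    using integral_fst[OF int_\<Phi>[unfolded \<Phi>_def]] by (simp add: \<Phi>_def Lop_def)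
  have second: "(\<integral>x. H x * poly (p * g) x \<partial>\<mu>) = integral\<^sup>L (\<mu> \<Otimes>\<^sub>M \<nu>) \<Psi>"
    using conj_var[of "p * g"] integral_snd[OF int_\<Psi>[unfolded \<Psi>_def]] by (simp add: \<Psi>_def)
  have right: "(\<integral>y. poly p y * Lop \<mu> (poly g) y \<partial>\<nu>) = integral\<^sup>L (\<mu> \<Otimes>\<^sub>M \<nu>) \<Theta>"
    using integral_snd[OF int_\<Theta>[unfolded \<Theta>_def]] by (simp add: \<Theta>_def Lop_\<mu>_g)
  have "integral\<^sup>L (\<mu> \<Otimes>\<^sub>M \<nu>) \<Phi> - integral\<^sup>L (\<mu> \<Otimes>\<^sub>M \<nu>) \<Psi>
      = (\<integral>z. \<Phi> z - \<Psi> z \<partial>(\<mu> \<Otimes>\<^sub>M \<nu>))"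
    using Bochner_Integration.integral_diff[OF int_\<Phi> int_\<Psi>] by simp
  also have "\<dots> = - integral\<^sup>L (\<mu> \<Otimes>\<^sub>M \<nu>) \<Theta>"
    by (simp add: \<Phi>_def \<Psi>_def \<Theta>_def case_prod_unfold ddiff_poly_mult_cancel)
  finally show ?thesis
    unfolding integral_Lop_minus_H_split[OF \<mu> \<nu> H] first second right .
qed

theorem lemma4p1:
  fixes \<mu> \<nu> :: "real measure" and H :: "real \<Rightarrow> real"
  assumes "prob_space \<mu>" "sets \<mu> = sets borel"
    and "prob_space \<nu>" "sets \<nu> = sets borel"
    and "compact_support \<mu>" "compact_support \<nu>"
    and "H \<in> borel_measurable \<mu>" "integrable \<mu> (\<lambda>x. (H x)\<^sup>2)"
    and "\<And>f :: real poly. (\<integral>y. (\<integral>x. ddiff (poly f) x y \<partial>\<mu>) \<partial>\<nu>) = (\<integral>x. H x * poly f x \<partial>\<mu>)"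
  shows "\<forall>f g :: real poly.
      (\<integral>x. (Lop \<nu> (Lop \<mu> (poly f)) x - H x * Lop \<mu> (poly f) x) * poly g x \<partial>\<mu>)
        = - (\<integral>x. Lop \<mu> (poly f) x * Lop \<mu> (poly g) x \<partial>\<nu>)
    \<and> (\<integral>x. (Lop \<nu> (Lop \<mu> (poly f)) x - H x * Lop \<mu> (poly f) x) * poly g x \<partial>\<mu>)
        = (\<integral>x. poly f x * (Lop \<nu> (Lop \<mu> (poly g)) x - H x * Lop \<mu> (poly g) x) \<partial>\<mu>)"
proof (intro allI conjI)
  have \<mu>: "compact_prob \<mu>" and \<nu>: "compact_prob \<nu>"
    using assms(1-6) by (simp_all add: compact_prob_def compact_prob_axioms_def)
  have main: "(\<integral>x. (Lop \<nu> (Lop \<mu> (poly f)) x - H x * Lop \<mu> (poly f) x) * poly g x \<partial>\<mu>)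
      = - (\<integral>x. Lop \<mu> (poly f) x * Lop \<mu> (poly g) x \<partial>\<nu>)" for f g :: "real poly"
  proof -
    obtain q where "Lop \<mu> (poly f) = poly q"
      using compact_prob.Lop_poly[OF \<mu>] by blast
    then show ?thesis using integral_Lop_minus_H[OF \<mu> \<nu> assms(7-9), of q g] by simp
  qed
  fix f g :: "real poly"
  show "(\<integral>x. (Lop \<nu> (Lop \<mu> (poly f)) x - H x * Lop \<mu> (poly f) x) * poly g x \<partial>\<mu>)
      = - (\<integral>x. Lop \<mu> (poly f) x * Lop \<mu> (poly g) x \<partial>\<nu>)"
    by (rule main)
  show "(\<integral>x. (Lop \<nu> (Lop \<mu> (poly f)) x - H x * Lop \<mu> (poly f) x) * poly g x \<partial>\<mu>)
      = (\<integral>x. poly f x * (Lop \<nu> (Lop \<mu> (poly g)) x - H x * Lop \<mu> (poly g) x) \<partial>\<mu>)"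
    using main[of f g] main[of g f] by (simp add: mult.commute)
qed

end
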